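(* Let $X$, $(Y_j)_{j\in\varGamma}$ and $(P_j)_{j\in\varGamma}$ satisfy: each $P_j:X\to Y_j$ is a bounded linear projection onto the closed subspace $Y_j$; $P_j\circ P_i=0$ for $i\neq j$; and $x\mapsto(P_j(x))_{j}$ is a bounded injective linear operator $X\to\left(\bigoplus_jY_j\right)_{c_0}$. Let $A=\sup_j\|P_j\|$ (which is finite). For $x\neq0$ choose $\beta(x)\in\varGamma$ with $\|P_{\beta(x)}(x)\|=\max_{i\in\varGamma}\|P_i(x)\|$, and define $R:X\to\bigcup_{j}Y_j$ by $R(0)=0$ and, for $x\neq0$, \[R(x)=\left(1-\max_{i\neq\beta(x)}\frac{\|P_i(x)\|}{\|P_{\beta(x)}(x)\|}\right)P_{\beta(x)}(x).\] Then $R$ is well defined (independent of the choice of $\beta(x)$), $R\circ R=R$, $R$ is the identity on $\bigcup_jY_j$, and $\|R(x)-R(y)\|\le 3A\|x-y\|$ for all $x,y\in X$.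
   Context: $\left(\bigoplus_jY_j\right)_{c_0}$ is the space of families $(y_j)$, $y_j\in Y_j$, such that for every $\epsilon>0$ only finitely many $\|y_j\|\ge\epsilon$, with the sup norm. *)

theory Defs
  imports "HOL-Analysis.Analysis"
begin

definition is_max_index :: "('j \<Rightarrow> 'a \<Rightarrow> 'a::real_normed_vector) \<Rightarrow> 'j set \<Rightarrow> 'a \<Rightarrow> 'j \<Rightarrow> bool" where
  "is_max_index P G x j \<longleftrightarrow> j \<in> G \<and> (\<forall>i\<in>G. norm (P i x) \<le> norm (P j x))"

text \<open>max over i in G, i ~= b, of norm (P i x); the maximum over the empty index set is taken to be 0.\<close>
definition other_max :: "('j \<Rightarrow> 'a \<Rightarrow> 'a::real_normed_vector) \<Rightarrow> 'j set \<Rightarrow> 'a \<Rightarrow> 'j \<Rightarrow> real" where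
  "other_max P G x b = Sup (insert 0 ((\<lambda>i. norm (P i x)) ` (G - {b})))"

definition Rmap :: "('j \<Rightarrow> 'a \<Rightarrow> 'a::real_normed_vector) \<Rightarrow> 'j set \<Rightarrow> ('a \<Rightarrow> 'j) \<Rightarrow> 'a \<Rightarrow> 'a" where
  "Rmap P G \<beta> x = (if x = 0 then 0
      else (1 - other_max P G x (\<beta> x) / norm (P (\<beta> x) x)) *\<^sub>R P (\<beta> x) x)"

end

theory Submission
  imports Defs
begin

text \<open>
  \<open>R x\<close> is the largest coordinate \<open>p = P\<^sub>\<beta> x\<close> shrunk by the factor \<open>1 - m/\<parallel>p\<parallel>\<close>, where \<open>m\<close> is
  the second largest coordinate norm. A tie for the maximum makes this factor vanish, which is why
  the choice of \<open>\<beta>\<close> does not matter, and on \<open>Y\<^sub>j\<close> all other coordinates vanish, so \<open>R\<close> fixes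
  \<open>\<Union>Y\<^sub>j\<close> and is a retraction onto it. For the Lipschitz bound let \<open>D\<close> dominate every
  \<open>\<parallel>P\<^sub>i x - P\<^sub>i y\<parallel>\<close>. If \<open>\<beta> x = \<beta> y\<close>, then \<open>R x - R y\<close> splits into
  \<open>(1 - m/a)(p - q)\<close>, of norm \<open>\<le> D\<close>, and a multiple of \<open>q\<close> of norm \<open>\<le> 2D\<close>, because \<open>m\<close> and
  \<open>a = \<parallel>p\<parallel>\<close> both move by at most \<open>D\<close>. If \<open>\<beta> x \<noteq> \<beta> y\<close>, then
  \<open>\<parallel>R x\<parallel> = a - m \<le> \<parallel>P\<^bsub>\<beta> x\<^esub> x\<parallel> - \<parallel>P\<^bsub>\<beta> y\<^esub> x\<parallel>\<close>, and symmetrically for \<open>y\<close>, giving \<open>2D\<close>.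
\<close>

lemma bdd_above_other_max_set:
  assumes "is_max_index P G x b"
  shows "bdd_above (insert 0 ((\<lambda>i. norm (P i x)) ` (G - {b})))"
  using assms unfolding is_max_index_def
  by (intro bdd_aboveI[where M = "norm (P b x)"]) auto

lemma other_max_nonneg:
  assumes "is_max_index P G x b"
  shows "0 \<le> other_max P G x b"
  unfolding other_max_def by (rule cSup_upper[OF _ bdd_above_other_max_set[OF assms]]) simp

lemma norm_le_other_max:
  assumes "is_max_index P G x b" "i \<in> G" "i \<noteq> b"
  shows "norm (P i x) \<le> other_max P G x b"
  unfolding other_max_def
  by (rule cSup_upper[OF _ bdd_above_other_max_set[OF assms(1)]]) (use assms(2,3) in auto)

lemma other_max_least:
  assumes "0 \<le> c" "\<And>i. i \<in> G \<Longrightarrow> i \<noteq> b \<Longrightarrow> norm (P i x) \<le> c"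
  shows "other_max P G x b \<le> c"
  unfolding other_max_def by (rule cSup_least) (use assms in auto)

lemma other_max_le_max:
  assumes "is_max_index P G x b"
  shows "other_max P G x b \<le> norm (P b x)"
  using assms unfolding is_max_index_def by (intro other_max_least) auto

lemma other_max_diff_le:
  assumes x: "is_max_index P G x b" and y: "is_max_index P G y b"
    and D: "\<And>i. i \<in> G \<Longrightarrow> norm (P i x - P i y) \<le> D"
  shows "\<bar>other_max P G x b - other_max P G y b\<bar> \<le> D"
proof -
  have D0: "0 \<le> D"
    using D x unfolding is_max_index_def by (meson norm_ge_zero order_trans)
  have "other_max P G x b \<le> other_max P G y b + D"
  proof (rule other_max_least)
    fix i assume "i \<in> G" "i \<noteq> b"
    with D[of i] norm_le_other_max[OF y] show "norm (P i x) \<le> other_max P G y b + D"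
      by (smt (verit) norm_triangle_ineq2)
  qed (use D0 other_max_nonneg[OF y] in simp)
  moreover have "other_max P G y b \<le> other_max P G x b + D"
  proof (rule other_max_least)
    fix i assume "i \<in> G" "i \<noteq> b"
    with D[of i] norm_le_other_max[OF x] show "norm (P i y) \<le> other_max P G x b + D"
      by (smt (verit) norm_triangle_ineq3)
  qed (use D0 other_max_nonneg[OF x] in simp)
  ultimately show ?thesis by linarith
qed

lemma norm_max_index_pos:
  assumes "is_max_index P G x b" "x \<noteq> 0" "(\<forall>j\<in>G. P j x = 0) \<Longrightarrow> x = 0"
  shows "0 < norm (P b x)"
proof (rule ccontr)
  assume "\<not> 0 < norm (P b x)"
  with assms(1) have "\<forall>j\<in>G. P j x = 0"
    unfolding is_max_index_def by (metis norm_le_zero_iff order_trans not_less)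
  with assms(2,3) show False by blast
qed

lemma shrunk_projection_dist_le:
  fixes p q :: "'a::real_normed_vector"
  assumes a: "0 < a" "a = norm p" and a': "0 < a'" "a' = norm q"
    and m: "0 \<le> m" "m \<le> a"
    and pq: "norm (p - q) \<le> D" and mm: "\<bar>m - m'\<bar> \<le> D"
  shows "norm ((1 - m / a) *\<^sub>R p - (1 - m' / a') *\<^sub>R q) \<le> 3 * D"
proof -
  have ratio: "0 \<le> m / a" "m / a \<le> 1" using a m by auto
  have "(1 - m / a) *\<^sub>R p - (1 - m' / a') *\<^sub>R q
      = (1 - m / a) *\<^sub>R (p - q) + (m' / a' - m / a) *\<^sub>R q"
    by (simp add: algebra_simps)
  also have "norm \<dots> \<le> norm ((1 - m / a) *\<^sub>R (p - q)) + norm ((m' / a' - m / a) *\<^sub>R q)"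
    by (rule norm_triangle_ineq)
  also have "norm ((1 - m / a) *\<^sub>R (p - q)) \<le> D"
    using ratio pq mult_left_le_one_le[of "norm (p - q)" "1 - m / a"] by simp
  also have "norm ((m' / a' - m / a) *\<^sub>R q) = \<bar>(m' - m) + m / a * (a - a')\<bar>"
    using a a' by (simp add: abs_mult[symmetric] field_simps)
  also have "\<dots> \<le> \<bar>m' - m\<bar> + \<bar>m / a * (a - a')\<bar>"
    by (rule abs_triangle_ineq)
  also have "\<bar>m / a * (a - a')\<bar> \<le> D"
  proof -
    have "\<bar>a - a'\<bar> \<le> D" using a a' pq by (metis norm_triangle_ineq3 order_trans)
    then show ?thesis
      using ratio mult_left_le_one_le[of "\<bar>a - a'\<bar>" "m / a"] by (simp only: abs_mult abs_of_nonneg) auto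
  qed
  finally show ?thesis using mm by simp
qed

lemma norm_Rmap:
  assumes "x \<noteq> 0" "is_max_index P G x (\<beta> x)" "0 < norm (P (\<beta> x) x)"
  shows "norm (Rmap P G \<beta> x) = norm (P (\<beta> x) x) - other_max P G x (\<beta> x)"
proof -
  have "0 \<le> 1 - other_max P G x (\<beta> x) / norm (P (\<beta> x) x)"
    using other_max_le_max[OF assms(2)] assms(3) by simp
  with assms show ?thesis by (simp add: Rmap_def field_simps)
qed

lemma norm_Rmap_le:
  assumes "\<And>x. x \<noteq> 0 \<Longrightarrow> is_max_index P G x (\<beta> x)"
    and "\<And>x. (\<forall>j\<in>G. P j x = 0) \<Longrightarrow> x = 0"
  shows "norm (Rmap P G \<beta> x) \<le> norm (P (\<beta> x) x)"
proof (cases "x = 0")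
  case False
  with assms norm_Rmap[OF False] norm_max_index_pos other_max_nonneg show ?thesis
    by (smt (verit))
qed (simp add: Rmap_def)

lemma Rmap_choice_independent:
  assumes \<beta>: "\<And>x. x \<noteq> 0 \<Longrightarrow> is_max_index P G x (\<beta> x)"
    and \<beta>': "\<And>x. x \<noteq> 0 \<Longrightarrow> is_max_index P G x (\<beta>' x)"
    and inj: "\<And>x. (\<forall>j\<in>G. P j x = 0) \<Longrightarrow> x = 0"
  shows "Rmap P G \<beta>' = Rmap P G \<beta>"
proof
  fix x
  show "Rmap P G \<beta>' x = Rmap P G \<beta> x"
  proof (cases "x = 0 \<or> \<beta>' x = \<beta> x")
    case False
    then have x: "x \<noteq> 0" and ne: "\<beta>' x \<noteq> \<beta> x" by auto
    note m = \<beta>[OF x] \<beta>'[OF x]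
    have G: "\<beta> x \<in> G" "\<beta>' x \<in> G" using m unfolding is_max_index_def by auto
    have same: "norm (P (\<beta>' x) x) = norm (P (\<beta> x) x)"
      using m G unfolding is_max_index_def by (meson antisym)
    have "other_max P G x (\<beta> x) = norm (P (\<beta> x) x)"
      using other_max_le_max[OF m(1)] norm_le_other_max[OF m(1) G(2) ne] same by simp
    moreover have "other_max P G x (\<beta>' x) = norm (P (\<beta>' x) x)"
      using other_max_le_max[OF m(2)] norm_le_other_max[OF m(2) G(1) ne[symmetric]] same by simp
    ultimately show ?thesis
      using x same norm_max_index_pos[OF m(1) x inj[of x]] by (simp add: Rmap_def)
  qed (auto simp: Rmap_def)
qed

lemma Rmap_in_subspace:
  assumes "subspace S" "P (\<beta> x) x \<in> S"
  shows "Rmap P G \<beta> x \<in> S"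
  using assms by (simp add: Rmap_def subspace_0 subspace_scale)

lemma Rmap_fixed_point:
  assumes \<beta>: "\<And>x. x \<noteq> 0 \<Longrightarrow> is_max_index P G x (\<beta> x)"
    and j: "j \<in> G" "P j y = y" and others: "\<And>i. i \<in> G \<Longrightarrow> i \<noteq> j \<Longrightarrow> P i y = 0"
  shows "Rmap P G \<beta> y = y"
proof (cases "y = 0")
  case False
  note m = \<beta>[OF False]
  have "\<beta> y = j"
  proof (rule ccontr)
    assume "\<beta> y \<noteq> j"
    with m j others have "norm y \<le> 0" unfolding is_max_index_def by force
    with False show False by simp
  qed
  moreover have "other_max P G y j = 0"
    using other_max_least[of 0 G j P y] other_max_nonneg[OF m] others \<open>\<beta> y = j\<close> by force
  ultimately show ?thesis using False j by (simp add: Rmap_def)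
qed (simp add: Rmap_def)

lemma Rmap_dist_le_same_index:
  assumes \<beta>: "\<And>x. x \<noteq> 0 \<Longrightarrow> is_max_index P G x (\<beta> x)"
    and inj: "\<And>x. (\<forall>j\<in>G. P j x = 0) \<Longrightarrow> x = 0"
    and x: "x \<noteq> 0" and y: "y \<noteq> 0" and same: "\<beta> x = \<beta> y"
    and D: "\<And>i. i \<in> G \<Longrightarrow> norm (P i x - P i y) \<le> D"
  shows "norm (Rmap P G \<beta> x - Rmap P G \<beta> y) \<le> 3 * D"
proof -
  have mx: "is_max_index P G x (\<beta> x)" using \<beta>[OF x] .
  have my: "is_max_index P G y (\<beta> x)" using \<beta>[OF y] same by simp
  then have "\<beta> x \<in> G" unfolding is_max_index_def by simp
  have "norm ((1 - other_max P G x (\<beta> x) / norm (P (\<beta> x) x)) *\<^sub>R P (\<beta> x) x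
      - (1 - other_max P G y (\<beta> x) / norm (P (\<beta> x) y)) *\<^sub>R P (\<beta> x) y) \<le> 3 * D"
    by (rule shrunk_projection_dist_le[OF norm_max_index_pos[OF mx x inj[of x]] refl
          norm_max_index_pos[OF my y inj[of y]] refl other_max_nonneg[OF mx] other_max_le_max[OF mx]
          D[OF \<open>\<beta> x \<in> G\<close>] other_max_diff_le[OF mx my D]])
  with x y same show ?thesis by (simp add: Rmap_def)
qed

lemma Rmap_dist_le_distinct_index:
  assumes \<beta>: "\<And>x. x \<noteq> 0 \<Longrightarrow> is_max_index P G x (\<beta> x)"
    and inj: "\<And>x. (\<forall>j\<in>G. P j x = 0) \<Longrightarrow> x = 0"
    and x: "x \<noteq> 0" and y: "y \<noteq> 0" and ne: "\<beta> x \<noteq> \<beta> y"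
    and D: "\<And>i. i \<in> G \<Longrightarrow> norm (P i x - P i y) \<le> D"
  shows "norm (Rmap P G \<beta> x - Rmap P G \<beta> y) \<le> 2 * D"
proof -
  note mx = \<beta>[OF x] and my = \<beta>[OF y]
  have G: "\<beta> x \<in> G" "\<beta> y \<in> G" using mx my unfolding is_max_index_def by auto
  have "norm (Rmap P G \<beta> x - Rmap P G \<beta> y) \<le> norm (Rmap P G \<beta> x) + norm (Rmap P G \<beta> y)"
    by (rule norm_triangle_ineq4)
  also have "\<dots> = (norm (P (\<beta> x) x) - other_max P G x (\<beta> x))
      + (norm (P (\<beta> y) y) - other_max P G y (\<beta> y))"
    using norm_Rmap[where \<beta> = \<beta>, OF x mx norm_max_index_pos[OF mx x inj[of x]]]
      norm_Rmap[where \<beta> = \<beta>, OF y my norm_max_index_pos[OF my y inj[of y]]] by simp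
  also have "\<dots> \<le> (norm (P (\<beta> x) x) - norm (P (\<beta> y) x)) + (norm (P (\<beta> y) y) - norm (P (\<beta> x) y))"
    using norm_le_other_max[OF mx G(2) ne[symmetric]] norm_le_other_max[OF my G(1) ne] by simp
  also have "\<dots> \<le> norm (P (\<beta> x) x - P (\<beta> x) y) + norm (P (\<beta> y) x - P (\<beta> y) y)"
    by (smt (verit) norm_triangle_ineq2 norm_minus_commute)
  also have "\<dots> \<le> 2 * D" using D[OF G(1)] D[OF G(2)] by simp
  finally show ?thesis .
qed

lemma Rmap_dist_le:
  assumes \<beta>: "\<And>x. x \<noteq> 0 \<Longrightarrow> is_max_index P G x (\<beta> x)"
    and inj: "\<And>x. (\<forall>j\<in>G. P j x = 0) \<Longrightarrow> x = 0"
    and P0: "\<And>i. i \<in> G \<Longrightarrow> P i 0 = 0"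
    and D: "\<And>i. i \<in> G \<Longrightarrow> norm (P i x - P i y) \<le> D" and "0 \<le> D"
  shows "norm (Rmap P G \<beta> x - Rmap P G \<beta> y) \<le> 3 * D"
proof -
  have \<beta>_G: "\<beta> z \<in> G" if "z \<noteq> 0" for z
    using \<beta>[OF that] unfolding is_max_index_def by simp
  have R0: "Rmap P G \<beta> 0 = 0" by (simp add: Rmap_def)
  consider "x = 0" "y = 0" | "x = 0" "y \<noteq> 0" | "x \<noteq> 0" "y = 0"
    | "x \<noteq> 0" "y \<noteq> 0" "\<beta> x = \<beta> y" | "x \<noteq> 0" "y \<noteq> 0" "\<beta> x \<noteq> \<beta> y"
    by blast
  then show ?thesis
  proof cases
    case 1
    with R0 \<open>0 \<le> D\<close> show ?thesis by simp
  next
    case 2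
    then have "norm (Rmap P G \<beta> y) \<le> norm (P (\<beta> y) x - P (\<beta> y) y)"
      using norm_Rmap_le[OF \<beta> inj, of y] P0[OF \<beta>_G[OF \<open>y \<noteq> 0\<close>]] by simp
    with 2 D[OF \<beta>_G[OF \<open>y \<noteq> 0\<close>]] R0 \<open>0 \<le> D\<close> show ?thesis by simp
  next
    case 3
    then have "norm (Rmap P G \<beta> x) \<le> norm (P (\<beta> x) x - P (\<beta> x) y)"
      using norm_Rmap_le[OF \<beta> inj, of x] P0[OF \<beta>_G[OF \<open>x \<noteq> 0\<close>]] by simp
    with 3 D[OF \<beta>_G[OF \<open>x \<noteq> 0\<close>]] R0 \<open>0 \<le> D\<close> show ?thesis by simp
  next
    case 4
    with Rmap_dist_le_same_index[OF \<beta> inj] D show ?thesis by blast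
  next
    case 5
    with Rmap_dist_le_distinct_index[OF \<beta> inj, of x y D] D \<open>0 \<le> D\<close> show ?thesis by simp
  qed
qed

lemma bdd_above_onorm_image:
  assumes "\<And>x j. j \<in> G \<Longrightarrow> norm (P j x) \<le> C * norm x"
  shows "bdd_above ((\<lambda>j. onorm (P j)) ` G)"
proof (rule bdd_aboveI2)
  fix j assume "j \<in> G"
  show "onorm (P j) \<le> max C 0"
  proof (rule onorm_bound)
    fix x
    show "norm (P j x) \<le> max C 0 * norm x"
      using assms[OF \<open>j \<in> G\<close>, of x] by (smt (verit) mult_right_mono norm_ge_zero)
  qed simp
qed

lemma Rmap_lipschitz:
  assumes \<beta>: "\<And>x. x \<noteq> 0 \<Longrightarrow> is_max_index P G x (\<beta> x)"
    and inj: "\<And>x. (\<forall>j\<in>G. P j x = 0) \<Longrightarrow> x = 0"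
    and lin: "\<And>j. j \<in> G \<Longrightarrow> bounded_linear (P j)"
    and bdd: "bdd_above ((\<lambda>j. onorm (P j)) ` G)"
  shows "norm (Rmap P G \<beta> x - Rmap P G \<beta> y) \<le> 3 * (SUP j\<in>G. onorm (P j)) * norm (x - y)"
proof -
  let ?A = "SUP j\<in>G. onorm (P j)"
  have onorm_le: "onorm (P j) \<le> ?A" if "j \<in> G" for j
    by (rule cSUP_upper[OF that bdd])
  have P_dist: "norm (P j x - P j y) \<le> ?A * norm (x - y)" if "j \<in> G" for j
    using onorm[OF lin[OF that], of "x - y"] onorm_le[OF that] lin[OF that]
    by (simp add: linear_simps order_trans[OF _ mult_right_mono])
  have "0 \<le> ?A * norm (x - y)"
  proof (cases "x = y")
    case False
    then obtain j where "j \<in> G" using inj[of "x - y"] by auto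
    then have "0 \<le> ?A" using onorm_pos_le[OF lin] onorm_le by (meson order_trans)
    then show ?thesis by simp
  qed simp
  moreover have "P j 0 = 0" if "j \<in> G" for j
    using lin[OF that] by (simp add: linear_simps)
  ultimately show ?thesis
    using Rmap_dist_le[OF \<beta> inj _ P_dist] by (simp add: mult.assoc)
qed

theorem mainTheorem9:
  fixes P :: "'j \<Rightarrow> 'a::real_normed_vector \<Rightarrow> 'a"
    and Y :: "'j \<Rightarrow> 'a set"
    and G :: "'j set"
    and \<beta> :: "'a \<Rightarrow> 'j"
  assumes lin: "\<forall>j\<in>G. bounded_linear (P j)"
    and Ysub: "\<forall>j\<in>G. subspace (Y j) \<and> closed (Y j)"
    and Prange: "\<forall>j\<in>G. range (P j) = Y j"
    and Pid: "\<forall>j\<in>G. \<forall>y\<in>Y j. P j y = y"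
    and orth: "\<forall>i\<in>G. \<forall>j\<in>G. i \<noteq> j \<longrightarrow> (\<forall>x. P j (P i x) = 0)"
    and c0: "\<forall>x. \<forall>e>0. finite {j\<in>G. e \<le> norm (P j x)}"
    and bdd: "\<exists>C. \<forall>x. \<forall>j\<in>G. norm (P j x) \<le> C * norm x"
    and inj: "\<forall>x. (\<forall>j\<in>G. P j x = 0) \<longrightarrow> x = 0"
    and beta: "\<forall>x. x \<noteq> 0 \<longrightarrow> is_max_index P G x (\<beta> x)"
  shows "bdd_above ((\<lambda>j. onorm (P j)) ` G)
    \<and> (\<exists>\<beta>'. \<forall>x. x \<noteq> 0 \<longrightarrow> is_max_index P G x (\<beta>' x))
    \<and> (\<forall>\<beta>'. (\<forall>x. x \<noteq> 0 \<longrightarrow> is_max_index P G x (\<beta>' x)) \<longrightarrow> Rmap P G \<beta>' = Rmap P G \<beta>)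
    \<and> (\<forall>x. x \<noteq> 0 \<longrightarrow> Rmap P G \<beta> x \<in> (\<Union>j\<in>G. Y j))
    \<and> Rmap P G \<beta> \<circ> Rmap P G \<beta> = Rmap P G \<beta>
    \<and> (\<forall>y\<in>(\<Union>j\<in>G. Y j). Rmap P G \<beta> y = y)
    \<and> (\<forall>x y. norm (Rmap P G \<beta> x - Rmap P G \<beta> y)
             \<le> 3 * (SUP j\<in>G. onorm (P j)) * norm (x - y))"
proof -
  \<comment> \<open>The \<open>c\<^sub>0\<close> condition only guarantees that maximal indices exist, and \<open>\<beta>\<close> supplies them.\<close>
  have \<beta>: "\<And>x. x \<noteq> 0 \<Longrightarrow> is_max_index P G x (\<beta> x)" and inj': "\<And>x. (\<forall>j\<in>G. P j x = 0) \<Longrightarrow> x = 0"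
    using beta inj by blast+
  let ?R = "Rmap P G \<beta>"
  obtain C where "\<forall>x. \<forall>j\<in>G. norm (P j x) \<le> C * norm x" using bdd by blast
  then have bdd_onorm: "bdd_above ((\<lambda>j. onorm (P j)) ` G)" by (intro bdd_above_onorm_image) blast
  have R_range: "?R x \<in> (\<Union>j\<in>G. Y j)" if "x \<noteq> 0" for x
  proof -
    have "\<beta> x \<in> G" using \<beta>[OF that] unfolding is_max_index_def by simp
    moreover from this have "P (\<beta> x) x \<in> Y (\<beta> x)" using Prange by blast
    ultimately show ?thesis using Rmap_in_subspace[of "Y (\<beta> x)"] Ysub by blast
  qed
  have R_fix: "?R y = y" if y: "y \<in> (\<Union>j\<in>G. Y j)" for y
  proof -
    obtain j where j: "j \<in> G" "y \<in> Y j" using y by blast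
    have Pj: "P j y = y" using Pid j by blast
    have Pi: "P i y = 0" if "i \<in> G" "i \<noteq> j" for i using orth j(1) that Pj by metis
    show ?thesis by (rule Rmap_fixed_point[OF \<beta> j(1) Pj Pi])
  qed
  have "?R \<circ> ?R = ?R"
  proof
    fix x
    show "(?R \<circ> ?R) x = ?R x"
      using R_range[of x] R_fix[of "?R x"] by (cases "x = 0") (simp_all add: Rmap_def)
  qed
  moreover have "Rmap P G \<beta>' = ?R" if "\<forall>x. x \<noteq> 0 \<longrightarrow> is_max_index P G x (\<beta>' x)" for \<beta>'
    using Rmap_choice_independent[OF \<beta> _ inj'] that by blast
  ultimately show ?thesis
    using bdd_onorm beta R_range R_fix Rmap_lipschitz[OF \<beta> inj' _ bdd_onorm] lin by meson
qed

end
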